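(* Let $\Gamma\subseteq\mathbb R^n$ be an open convex set, $S\subseteq\Gamma$ a nonempty convex set, and $f:\Gamma\to\mathbb R$ a continuously differentiable function that is quasiconvex on $\Gamma$. Let $\bar S=\arg\min\{f(x)\mid x\in S\}$, and suppose $\bar x\in\bar S$ with $\nabla f(\bar x)=0$. Then $\nabla f(x)=0$ for all $x\in\bar S$. If in addition $f$ is pseudoconvex at every point $x\in S\setminus\bar S$, then $\bar S=\tilde S:=\{x\in S\mid \nabla f(x)=0\}$.
   Context: A function $f:\Gamma\to\mathbb R$ on a convex set $\Gamma$ is quasiconvex on $\Gamma$ iff $f(x+t(y-x))\le\max\{f(x),f(y)\}$ for all $x,y\in\Gamma$, $t\in[0,1]$. A differentiable function $f$ on the open set $\Gamma$ is pseudoconvex at $x\in\Gamma$ iff for every $y\in\Gamma$, $f(y)<f(x)$ implies $\nabla f(x)^T(y-x)<0$. *)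

theory Defs
  imports "HOL-Analysis.Analysis"
begin

definition quasiconvex_on :: "'a::real_vector set \<Rightarrow> ('a \<Rightarrow> real) \<Rightarrow> bool" where
  "quasiconvex_on G f \<longleftrightarrow>
     (\<forall>x\<in>G. \<forall>y\<in>G. \<forall>t::real. 0 \<le> t \<and> t \<le> 1 \<longrightarrow> f (x + t *\<^sub>R (y - x)) \<le> max (f x) (f y))"

definition pseudoconvex_at :: "'a::real_inner set \<Rightarrow> ('a \<Rightarrow> real) \<Rightarrow> ('a \<Rightarrow> 'a) \<Rightarrow> 'a \<Rightarrow> bool" where
  "pseudoconvex_at G f grad x \<longleftrightarrow> (\<forall>y\<in>G. f y < f x \<longrightarrow> grad x \<bullet> (y - x) < 0)"

definition argmin_on :: "('a \<Rightarrow> real) \<Rightarrow> 'a set \<Rightarrow> 'a set" where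
  "argmin_on f S = {x \<in> S. \<forall>y\<in>S. f x \<le> f y}"

end

theory Submission
  imports Defs
begin

text \<open>
  Let \<open>x\<close> and \<open>y\<close> be minimizers with \<open>\<nabla>f y = 0\<close>, and \<open>z = x + \<theta>(y - x)\<close> with \<open>0 < \<theta> < 1\<close>.
  Keeping \<open>x\<close> fixed and moving \<open>y\<close> by \<open>t v / \<theta>\<close> moves \<open>z\<close> by \<open>t v\<close>; for \<open>v = \<nabla>f z\<close> the value at
  \<open>z\<close> grows at rate \<open>|\<nabla>f z|\<^sup>2\<close>, while the values at the two end points grow at rate \<open>0\<close>.
  Quasiconvexity forbids the middle value from exceeding both end values, so \<open>\<nabla>f z = 0\<close>;
  letting \<open>z\<close> tend to \<open>x\<close> gives \<open>\<nabla>f x = 0\<close>. The second claim follows because a pseudoconvex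
  critical point is a global minimizer.
\<close>

lemma eventually_less_at_right_of_pos_deriv:
  fixes \<phi> :: "real \<Rightarrow> real"
  assumes "(\<phi> has_real_derivative l) (at 0)" "l > 0"
  shows "eventually (\<lambda>t. \<phi> 0 < \<phi> t) (at_right 0)"
proof -
  obtain d where "d > 0" "\<And>h. h > 0 \<Longrightarrow> h < d \<Longrightarrow> \<phi> 0 < \<phi> (0 + h)"
    using DERIV_pos_inc_right[OF assms] by auto
  then show ?thesis
    unfolding eventually_at_right_field by auto
qed

lemma has_real_derivative_along_line:
  fixes f :: "'a::real_inner \<Rightarrow> real"
  assumes "(f has_derivative (\<lambda>h. g \<bullet> h)) (at y)"
  shows "((\<lambda>t. f (y + t *\<^sub>R v)) has_real_derivative (g \<bullet> v)) (at 0)"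
proof -
  have "((\<lambda>t::real. y + t *\<^sub>R v) has_derivative (\<lambda>t. t *\<^sub>R v)) (at 0)"
    by (auto intro!: derivative_eq_intros)
  from has_derivative_compose[OF this, of f "\<lambda>h. g \<bullet> h"] assms
  have "((\<lambda>t. f (y + t *\<^sub>R v)) has_derivative (\<lambda>t. (g \<bullet> v) * t)) (at 0)"
    by (simp add: mult.commute)
  then show ?thesis
    unfolding has_field_derivative_def by simp
qed

lemma eventually_along_line_in_open:
  fixes y :: "'a::real_normed_vector"
  assumes "open G" "y \<in> G"
  shows "eventually (\<lambda>t. y + t *\<^sub>R v \<in> G) (at_right 0)"
proof -
  have "((\<lambda>t. y + t *\<^sub>R v) \<longlongrightarrow> y) (at_right 0)"
    by (auto intro!: tendsto_eq_intros)
  then show ?thesis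
    using topological_tendstoD assms by blast
qed

text \<open>
  If the end points move with velocities \<open>u\<close> and \<open>v\<close>, then \<open>z\<close> moves with velocity
  \<open>u + \<theta>(v - u)\<close>; since \<open>z\<close> is at least as high as both end points, quasiconvexity forbids
  its value from increasing faster than both end values.
\<close>
lemma quasiconvex_on_gradient_inner_le_max:
  fixes f :: "'a::real_inner \<Rightarrow> real"
  assumes "open G" "convex G" "quasiconvex_on G f"
    and deriv: "\<And>p. p \<in> G \<Longrightarrow> (f has_derivative (\<lambda>h. grad p \<bullet> h)) (at p)"
    and "x \<in> G" "y \<in> G" "0 \<le> \<theta>" "\<theta> \<le> 1"
    and z: "z = x + \<theta> *\<^sub>R (y - x)" and "f x \<le> f z" "f y \<le> f z"
  shows "grad z \<bullet> (u + \<theta> *\<^sub>R (v - u)) \<le> max (grad x \<bullet> u) (grad y \<bullet> v)"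
proof (rule ccontr)
  define w where "w = u + \<theta> *\<^sub>R (v - u)"
  assume "\<not> ?thesis"
  then have faster: "grad z \<bullet> w - grad x \<bullet> u > 0" "grad z \<bullet> w - grad y \<bullet> v > 0"
    by (auto simp: w_def)
  have "z = (1 - \<theta>) *\<^sub>R x + \<theta> *\<^sub>R y"
    by (simp add: z algebra_simps)
  then have "z \<in> G"
    using convexD[OF \<open>convex G\<close> \<open>x \<in> G\<close> \<open>y \<in> G\<close>, of "1 - \<theta>" \<theta>] assms(7,8) by simp
  note line = has_real_derivative_along_line[OF deriv]
  have "eventually (\<lambda>t. f z - f x < f (z + t *\<^sub>R w) - f (x + t *\<^sub>R u)) (at_right 0)"
    using eventually_less_at_right_of_pos_deriv[OF DERIV_diff[OF line line] faster(1)]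
      \<open>z \<in> G\<close> \<open>x \<in> G\<close> by simp
  moreover have "eventually (\<lambda>t. f z - f y < f (z + t *\<^sub>R w) - f (y + t *\<^sub>R v)) (at_right 0)"
    using eventually_less_at_right_of_pos_deriv[OF DERIV_diff[OF line line] faster(2)]
      \<open>z \<in> G\<close> \<open>y \<in> G\<close> by simp
  moreover have "eventually (\<lambda>t. x + t *\<^sub>R u \<in> G \<and> y + t *\<^sub>R v \<in> G) (at_right 0)"
    using eventually_along_line_in_open[OF \<open>open G\<close>] \<open>x \<in> G\<close> \<open>y \<in> G\<close>
    by (intro eventually_conj)
  ultimately have "eventually (\<lambda>t. f z - f x < f (z + t *\<^sub>R w) - f (x + t *\<^sub>R u)
      \<and> f z - f y < f (z + t *\<^sub>R w) - f (y + t *\<^sub>R v)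
      \<and> x + t *\<^sub>R u \<in> G \<and> y + t *\<^sub>R v \<in> G) (at_right 0)"
    by eventually_elim blast
  then obtain t where t:
      "f z - f x < f (z + t *\<^sub>R w) - f (x + t *\<^sub>R u)"
      "f z - f y < f (z + t *\<^sub>R w) - f (y + t *\<^sub>R v)"
      "x + t *\<^sub>R u \<in> G" "y + t *\<^sub>R v \<in> G"
    using eventually_happens'[of "at_right (0::real)"] by auto
  define P where "P = x + t *\<^sub>R u"
  define Q where "Q = y + t *\<^sub>R v"
  have "P + \<theta> *\<^sub>R (Q - P) = z + t *\<^sub>R w"
    by (simp add: P_def Q_def z w_def algebra_simps)
  moreover have "f (P + \<theta> *\<^sub>R (Q - P)) \<le> max (f P) (f Q)"
    using \<open>quasiconvex_on G f\<close> t(3,4) assms(7,8)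
    unfolding quasiconvex_on_def P_def Q_def by blast
  ultimately have "f (z + t *\<^sub>R w) \<le> max (f P) (f Q)"
    by simp
  moreover have "f P < f (z + t *\<^sub>R w)" "f Q < f (z + t *\<^sub>R w)"
    using t(1,2) assms(10,11) unfolding P_def Q_def by linarith+
  ultimately show False
    by (simp add: not_le[symmetric])
qed

lemma quasiconvex_on_gradient_eq_0_between:
  fixes f :: "'a::real_inner \<Rightarrow> real"
  assumes "open G" "convex G" "quasiconvex_on G f"
    and "\<And>p. p \<in> G \<Longrightarrow> (f has_derivative (\<lambda>h. grad p \<bullet> h)) (at p)"
    and "x \<in> G" "y \<in> G" "grad y = 0" "0 < \<theta>" "\<theta> \<le> 1"
    and "z = x + \<theta> *\<^sub>R (y - x)" "f x \<le> f z" "f y \<le> f z"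
  shows "grad z = 0"
proof -
  have "grad z \<bullet> (0 + \<theta> *\<^sub>R (inverse \<theta> *\<^sub>R grad z - 0))
      \<le> max (grad x \<bullet> 0) (grad y \<bullet> (inverse \<theta> *\<^sub>R grad z))"
    using assms by (intro quasiconvex_on_gradient_inner_le_max[where G = G]) auto
  then have "grad z \<bullet> grad z \<le> 0"
    using assms(7,8) by simp
  then show ?thesis
    by (metis inner_gt_zero_iff not_le)
qed

lemma argmin_on_gradient_eq_0:
  fixes f :: "'a::real_inner \<Rightarrow> real"
  assumes "open G" "convex G" "S \<subseteq> G" "convex S" "quasiconvex_on G f"
    and "\<And>p. p \<in> G \<Longrightarrow> (f has_derivative (\<lambda>h. grad p \<bullet> h)) (at p)"
    and "isCont grad x"
    and "xbar \<in> argmin_on f S" "grad xbar = 0" "x \<in> argmin_on f S"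
  shows "grad x = 0"
proof -
  define z where "z \<theta> = x + \<theta> *\<^sub>R (xbar - x)" for \<theta> :: real
  have "x \<in> S" "xbar \<in> S" "\<And>y. y \<in> S \<Longrightarrow> f x \<le> f y \<and> f xbar \<le> f y"
    using assms(8,10) by (auto simp: argmin_on_def)
  have "grad (z \<theta>) = 0" if "0 < \<theta>" "\<theta> < 1" for \<theta>
  proof (rule quasiconvex_on_gradient_eq_0_between[where G = G and grad = grad and z = "z \<theta>"])
    have "z \<theta> = (1 - \<theta>) *\<^sub>R x + \<theta> *\<^sub>R xbar"
      by (simp add: z_def algebra_simps)
    then have "z \<theta> \<in> S"
      using convexD[OF \<open>convex S\<close> \<open>x \<in> S\<close> \<open>xbar \<in> S\<close>, of "1 - \<theta>" \<theta>] that by simp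
    then show "f x \<le> f (z \<theta>)" "f xbar \<le> f (z \<theta>)"
      using \<open>\<And>y. y \<in> S \<Longrightarrow> f x \<le> f y \<and> f xbar \<le> f y\<close> by auto
  qed (use assms(1,2,3,5,6,9) \<open>x \<in> S\<close> \<open>xbar \<in> S\<close> that in \<open>auto simp: z_def\<close>)
  then have "eventually (\<lambda>\<theta>. grad (z \<theta>) = 0) (at_right 0)"
    unfolding eventually_at_right_field by (intro exI[of _ 1]) auto
  moreover have "((\<lambda>\<theta>. grad (z \<theta>)) \<longlongrightarrow> grad x) (at_right 0)"
    unfolding z_def using \<open>isCont grad x\<close>
    by (intro isCont_tendsto_compose[of x grad]) (auto intro!: tendsto_eq_intros)
  ultimately have "((\<lambda>_. 0) \<longlongrightarrow> grad x) (at_right (0::real))"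
    by (rule Lim_transform_eventually[rotated])
  then show ?thesis
    by (simp add: tendsto_const_iff)
qed

lemma pseudoconvex_at_critical_imp_min:
  assumes "pseudoconvex_at G f grad x" "grad x = 0" "y \<in> G"
  shows "f x \<le> f y"
  using assms unfolding pseudoconvex_at_def by force

theorem theorem2:
  fixes f :: "real ^ 'n \<Rightarrow> real" and grad :: "real ^ 'n \<Rightarrow> real ^ 'n"
    and G S :: "(real ^ 'n) set" and xbar :: "real ^ 'n"
  assumes "open G" and "convex G"
    and "S \<subseteq> G" and "S \<noteq> {}" and "convex S"
    and deriv: "\<And>x. x \<in> G \<Longrightarrow> (f has_derivative (\<lambda>h. grad x \<bullet> h)) (at x)"
    and "continuous_on G grad"
    and "quasiconvex_on G f"
    and "xbar \<in> argmin_on f S" and "grad xbar = 0"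
  shows "(\<forall>x\<in>argmin_on f S. grad x = 0)
    \<and> ((\<forall>x\<in>S - argmin_on f S. pseudoconvex_at G f grad x)
         \<longrightarrow> argmin_on f S = {x\<in>S. grad x = 0})"
proof (intro conjI ballI impI)
  show critical: "grad x = 0" if "x \<in> argmin_on f S" for x
  proof (rule argmin_on_gradient_eq_0[where G = G and S = S and xbar = xbar and grad = grad and x = x])
    have "x \<in> G"
      using that \<open>S \<subseteq> G\<close> by (auto simp: argmin_on_def)
    then show "isCont grad x"
      using \<open>continuous_on G grad\<close> \<open>open G\<close> continuous_on_eq_continuous_at by blast
  qed (use assms that in auto)
  assume pseudo: "\<forall>x\<in>S - argmin_on f S. pseudoconvex_at G f grad x"
  have "x \<in> argmin_on f S" if "x \<in> S" "grad x = 0" for x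
    using pseudo pseudoconvex_at_critical_imp_min[of G f grad x] that \<open>S \<subseteq> G\<close>
    by (cases "x \<in> argmin_on f S") (auto simp: argmin_on_def)
  with critical show "argmin_on f S = {x\<in>S. grad x = 0}"
    by (auto simp: argmin_on_def)
qed

end
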